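(* Let $n\ge 1$ and $1\le k\le n+1$ be integers, let $q$ be a prime power, and let $T$ be a hereditary property of families. If every family $\mathcal{F}\subseteq 2^{[n]}$ satisfying $T$ has at most $\Sigma(n,k)$ members, then every family of subspaces of $\mathbb{F}_q^n$ with property $T$ has at most $\Sigma_q(n,k)$ members.
   Context: $[n]=\{1,\dots,n\}$ and $2^{[n]}$ is the family of all its subsets. $\mathbb{F}_q^n$ is the $n$-dimensional vector space over the field with $q$ elements. A property $T$ of families is a property that makes sense for families of members of any lattice (such as $2^{[n]}$ ordered by inclusion, or the subspaces of $\mathbb{F}_q^n$ ordered by inclusion), defined in terms of the inclusion/intersection structure of the family, so that it is preserved by injective maps preserving inclusion, intersection and span/union (e.g. properties defined by forbidding inclusion patterns); it is hereditary if every subfamily of a family with property $T$ also has property $T$. $\Sigma(n,k)=\sum_{i=1}^k\binom{n}{\lfloor\frac{n-k}{2}\rfloor+i}$ is the total size of the $k$ middle levels of $2^{[n]}$, and $\Sigma_q(n,k)=\sum_{i=1}^k{n \brack \lfloor\frac{n-k}{2}\rfloor+i}_q$, where ${n\brack j}_q=\frac{(q^n-1)(q^{n-1}-1)\cdots(q^{n-j+1}-1)}{(q^j-1)(q^{j-1}-1)\cdots(q-1)}$ is the number of $j$-dimensional subspaces of $\mathbb{F}_q^n$. *)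

theory Defs
  imports Complex_Main "HOL-Library.Function_Algebras" "HOL-Library.Cardinality"
begin

text \<open>Vectors of F_q^n are functions 'n \<Rightarrow> 'a with CARD('n) = n and 'a a finite field
  (so q = CARD('a)); subsets of [n] are subsets of the finite type 'n.\<close>

definition vscale :: "'a::field \<Rightarrow> ('n \<Rightarrow> 'a) \<Rightarrow> ('n \<Rightarrow> 'a)" where
  "vscale c v = (\<lambda>i. c * v i)"

definition subspaces :: "('n \<Rightarrow> 'a::field) set set" where
  "subspaces = {S. module.subspace vscale S}"

definition vspan :: "('n \<Rightarrow> 'a::field) set \<Rightarrow> ('n \<Rightarrow> 'a) set" where
  "vspan S = module.span vscale S"

text \<open>Sigma(n,k) = sum_{i=1}^k binom(n, floor((n-k)/2) + i); int div is floor division.\<close>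
definition Sigma_mid :: "nat \<Rightarrow> nat \<Rightarrow> nat" where
  "Sigma_mid n k = (\<Sum>i=1..k. n choose nat ((int n - int k) div 2 + int i))"

definition qbinom :: "nat \<Rightarrow> nat \<Rightarrow> nat \<Rightarrow> real" where
  "qbinom q n j = (\<Prod>i<j. real q ^ (n - i) - 1) / (\<Prod>i<j. real q ^ (i + 1) - 1)"

definition Sigma_q :: "nat \<Rightarrow> nat \<Rightarrow> nat \<Rightarrow> real" where
  "Sigma_q q n k = (\<Sum>i=1..k. qbinom q n (nat ((int n - int k) div 2 + int i)))"

definition subspace_embedding :: "('n set \<Rightarrow> ('n \<Rightarrow> 'a::field) set) \<Rightarrow> bool" where
  "subspace_embedding \<phi> \<longleftrightarrow>
     (\<forall>A. \<phi> A \<in> subspaces) \<and> inj \<phi> \<and>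
     (\<forall>A B. A \<subseteq> B \<longleftrightarrow> \<phi> A \<subseteq> \<phi> B) \<and>
     (\<forall>A B. \<phi> (A \<inter> B) = \<phi> A \<inter> \<phi> B) \<and>
     (\<forall>A B. \<phi> (A \<union> B) = vspan (\<phi> A \<union> \<phi> B))"

end

(*
  Every ordered basis B of F_q^n spans a copy A \<mapsto> span (B ` A) of the Boolean lattice 2^[n]
  inside the subspace lattice, and this copy is a subspace embedding.  So the members of a
  T-family G of subspaces that lie in the copy come from a T-family of sets, and there are at
  most Sigma(n,k) of them.  Averaging over all ordered bases, a fixed j-dimensional subspace lies
  in the copy with probability binom(n,j) / [n,j]_q, whence the LYM-type inequality
  sum over U in G of binom(n, dim U) / [n, dim U]_q <= Sigma(n,k).
  The ratio [n,j]_q / binom(n,j) is symmetric in j and n - j and increases towards the middle,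
  so under this inequality and the trivial bounds |G_j| <= [n,j]_q the size of G is largest
  when G consists of the k middle levels, i.e. |G| <= Sigma_q(n,k).
*)
theory Submission
  imports Defs "HOL-Library.FuncSet"
begin

lemma (in module) span_Un_span: "span (span X \<union> span Y) = span (X \<union> Y)"
proof (rule span_eq[THEN iffD2], intro conjI)
  show "X \<union> Y \<subseteq> span (span X \<union> span Y)"
    using span_superset[of X] span_superset[of Y] span_superset[of "span X \<union> span Y"] by blast
qed (simp add: span_mono)

context vector_space
begin

lemma span_Int_independent:
  assumes "independent Z" "X \<subseteq> Z" "Y \<subseteq> Z"
  shows "span X \<inter> span Y = span (X \<inter> Y)"
proof
  show "span X \<inter> span Y \<subseteq> span (X \<inter> Y)"
  proof
    fix v assume v: "v \<in> span X \<inter> span Y"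
    let ?R = "representation Z v"
    have RX: "?R = representation X v" and RY: "?R = representation Y v"
      using v assms by (auto intro: representation_extend)
    have supp: "{b. ?R b \<noteq> 0} \<subseteq> X \<inter> Y"
      using representation_ne_zero[of X v] representation_ne_zero[of Y v] RX RY by auto
    have "v = (\<Sum>b | ?R b \<noteq> 0. scale (?R b) b)"
      using v assms span_mono[of X Z] by (intro sum_nonzero_representation_eq[symmetric]) auto
    also have "\<dots> \<in> span (X \<inter> Y)"
      using supp by (intro span_sum span_scale span_base) auto
    finally show "v \<in> span (X \<inter> Y)" .
  qed
qed (simp add: span_mono)

lemma card_span_independent:
  assumes "finite (UNIV :: 'a set)" "independent S" "finite S"
  shows "card (span S) = CARD('a) ^ card S"
  using assms(3,2)
proof (induction S rule: finite_induct)
  case (insert x S)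
  then have indep: "independent S" and x: "x \<notin> span S"
    using independent_insert by auto
  have "inj_on (\<lambda>(c, y). scale c x + y) (UNIV \<times> span S)"
  proof (rule inj_onI, clarsimp)
    fix c c' y y' assume y: "y \<in> span S" "y' \<in> span S" and eq: "scale c x + y = scale c' x + y'"
    then have "scale (c - c') x = y' - y"
      by (simp add: scale_left_diff_distrib algebra_simps)
    then have "scale (c - c') x \<in> span S"
      using y by (simp add: span_diff)
    then have "c = c'"
      using x span_scale[of "scale (c - c') x" S "inverse (c - c')"]
      by (metis left_inverse right_minus_eq scale_one scale_scale)
    with eq show "c = c' \<and> y = y'" by simp
  qed
  moreover have "(\<lambda>(c, y). scale c x + y) ` (UNIV \<times> span S) = span (insert x S)"
  proof (intro equalityI subsetI)
    fix z assume "z \<in> (\<lambda>(c, y). scale c x + y) ` (UNIV \<times> span S)"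
    then obtain c y where "y \<in> span S" "z = scale c x + y" by auto
    then show "z \<in> span (insert x S)"
      by (auto simp: span_breakdown_eq intro!: exI[of _ c])
  next
    fix z assume "z \<in> span (insert x S)"
    then obtain c where "z - scale c x \<in> span S"
      by (auto simp: span_breakdown_eq)
    then show "z \<in> (\<lambda>(c, y). scale c x + y) ` (UNIV \<times> span S)"
      by (intro image_eqI[of _ _ "(c, z - scale c x)"]) auto
  qed
  ultimately have "card (span (insert x S)) = CARD('a) * card (span S)"
    by (metis card_image card_cartesian_product)
  with insert indep show ?case by simp
qed simp

lemma card_subspace:
  assumes "finite (UNIV :: 'a set)" "subspace U" "finite U"
  shows "card U = CARD('a) ^ dim U"
proof -
  obtain B where B: "B \<subseteq> U" "independent B" "U \<subseteq> span B" "card B = dim U"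
    using basis_exists by blast
  then have "span B = U"
    using assms span_minimal by blast
  with B assms show ?thesis
    using card_span_independent[of B] finite_subset[of B U] by simp
qed

end

interpretation V: vector_space "vscale :: 'a::field \<Rightarrow> ('n \<Rightarrow> 'a) \<Rightarrow> _"
  by unfold_locales (auto simp: vscale_def fun_eq_iff algebra_simps)

lemma card_field_ge_two: "2 \<le> CARD('a::{field,finite})"
proof -
  have "card {0::'a, 1} \<le> CARD('a)"
    by (rule card_mono) auto
  then show ?thesis by simp
qed

lemma card_fun_subspace:
  fixes U :: "('n::finite \<Rightarrow> 'a::{field,finite}) set"
  shows "V.subspace U \<Longrightarrow> card U = CARD('a) ^ V.dim U"
  by (rule V.card_subspace) auto

lemma dim_UNIV_fun: "V.dim (UNIV :: ('n::finite \<Rightarrow> 'a::{field,finite}) set) = CARD('n)"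
proof -
  have "CARD('a) ^ V.dim (UNIV :: ('n \<Rightarrow> 'a) set) = CARD('a) ^ CARD('n)"
    using card_fun_subspace[of "UNIV :: ('n \<Rightarrow> 'a) set"] by (simp add: card_fun)
  then show ?thesis
    using card_field_ge_two[where 'a='a] by (simp add: power_inject_exp)
qed

lemma dim_fun_subspace_le:
  fixes U :: "('n::finite \<Rightarrow> 'a::{field,finite}) set"
  assumes "V.subspace U"
  shows "V.dim U \<le> CARD('n)"
proof -
  have "CARD('a) ^ V.dim U \<le> CARD('a) ^ CARD('n)"
    using card_fun_subspace[OF assms] card_mono[of UNIV U] by (simp add: card_fun)
  then show ?thesis
    using card_field_ge_two[where 'a='a] by (simp add: power_le_imp_le_exp)
qed

lemma span_eq_if_card_eq_dim:
  fixes U X :: "('n::finite \<Rightarrow> 'a::{field,finite}) set"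
  assumes "V.subspace U" "X \<subseteq> U" "V.independent X" "card X = V.dim U"
  shows "V.span X = U"
proof (rule card_subset_eq)
  show "V.span X \<subseteq> U"
    using assms V.span_minimal by blast
  show "card (V.span X) = card U"
    using assms card_fun_subspace[OF assms(1)] V.card_span_independent[of X] by simp
qed simp

definition independent_extensions ::
    "('n \<Rightarrow> 'a::field) set \<Rightarrow> ('n \<Rightarrow> 'a) set \<Rightarrow> 'i set \<Rightarrow> ('i \<Rightarrow> 'n \<Rightarrow> 'a) set" where
  "independent_extensions U S I =
     {f \<in> I \<rightarrow>\<^sub>E U. inj_on f I \<and> f ` I \<inter> S = {} \<and> V.independent (S \<union> f ` I)}"

lemma fun_upd_mem_independent_extensions:
  assumes "x \<notin> I" "g \<in> independent_extensions U S I" "v \<in> U" "v \<notin> V.span (S \<union> g ` I)"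
  shows "g(x := v) \<in> independent_extensions U S (insert x I)"
proof -
  let ?h = "g(x := v)"
  have gI: "g \<in> I \<rightarrow>\<^sub>E U" "inj_on g I" "g ` I \<inter> S = {}" "V.independent (S \<union> g ` I)"
    using assms(2) by (auto simp: independent_extensions_def)
  have hI: "?h ` I = g ` I"
    using assms(1) by (intro image_cong) auto
  then have img: "?h ` insert x I = insert v (g ` I)"
    unfolding image_insert by simp
  have v_new: "v \<notin> S \<union> g ` I"
    using V.span_base[of v "S \<union> g ` I"] assms(4) by blast
  have "inj_on ?h I \<longleftrightarrow> inj_on g I"
    by (rule inj_on_cong) (use assms(1) in auto)
  then have "inj_on ?h (insert x I)"
    using assms(1) hI v_new gI(2) by simp
  moreover have "?h \<in> insert x I \<rightarrow>\<^sub>E U"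
    by (rule PiE_fun_upd[OF assms(3) gI(1)])
  moreover have "V.independent (insert v (S \<union> g ` I))"
    using gI(4) assms(4) by (intro V.independent_insertI) auto
  ultimately show ?thesis
    using gI(3) v_new unfolding independent_extensions_def mem_Collect_eq img by simp
qed

lemma independent_extensions_insert:
  assumes "x \<notin> I"
  shows "independent_extensions U S (insert x I) =
    (\<lambda>(f, v). f(x := v)) ` (SIGMA f : independent_extensions U S I. U - V.span (S \<union> f ` I))"
proof (intro equalityI subsetI)
  fix f assume f: "f \<in> independent_extensions U S (insert x I)"
  let ?g = "f(x := undefined)"
  have img: "?g ` I = f ` I"
    using assms by (auto simp: fun_upd_image)
  have "f x \<notin> S \<union> f ` I" "V.independent (insert (f x) (S \<union> f ` I))"
    using f assms by (auto simp: independent_extensions_def)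
  then have "f x \<notin> V.span (S \<union> f ` I)"
    by (simp add: V.independent_insert)
  moreover have "?g \<in> independent_extensions U S I"
  proof -
    have "?g \<in> I \<rightarrow>\<^sub>E U" "inj_on ?g I" "?g ` I \<inter> S = {}"
      using f assms unfolding img by (auto simp: independent_extensions_def PiE_iff inj_on_def)
    moreover have "V.independent (S \<union> f ` insert x I)"
      using f by (simp add: independent_extensions_def)
    then have "V.independent (S \<union> ?g ` I)"
      unfolding img by (rule V.independent_mono) auto
    ultimately show ?thesis
      by (simp add: independent_extensions_def)
  qed
  moreover have "f x \<in> U"
    using f by (auto simp: independent_extensions_def)
  ultimately show "f \<in> (\<lambda>(f, v). f(x := v)) ` (SIGMA f : independent_extensions U S I. U - V.span (S \<union> f ` I))"
    using img by (intro image_eqI[of _ _ "(?g, f x)"]) auto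
next
  fix h assume "h \<in> (\<lambda>(f, v). f(x := v)) ` (SIGMA f : independent_extensions U S I. U - V.span (S \<union> f ` I))"
  then show "h \<in> independent_extensions U S (insert x I)"
    using assms fun_upd_mem_independent_extensions by auto
qed

lemma inj_on_fun_upd_PiE:
  assumes "x \<notin> I"
  shows "inj_on (\<lambda>(f, v). f(x := v)) ((I \<rightarrow>\<^sub>E A) \<times> B)"
proof (rule inj_onI, clarify)
  fix f v f' v' assume f: "f \<in> I \<rightarrow>\<^sub>E A" "f' \<in> I \<rightarrow>\<^sub>E A" and eq: "f(x := v) = f'(x := v')"
  then have "f x = f' x"
    using PiE_arb assms by metis
  have "f = (f(x := v))(x := f x)"
    by simp
  also have "\<dots> = f'"
    using eq \<open>f x = f' x\<close> by simp
  finally show "f = f' \<and> v = v'"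
    using fun_cong[OF eq, of x] by simp
qed

lemma finite_independent_extensions:
  fixes U S :: "('n::finite \<Rightarrow> 'a::{field,finite}) set"
  shows "finite I \<Longrightarrow> finite (independent_extensions U S I)"
  unfolding independent_extensions_def by (rule finite_subset[of _ "I \<rightarrow>\<^sub>E U"]) (auto intro: finite_PiE)

lemma card_independent_extensions:
  fixes U S :: "('n::finite \<Rightarrow> 'a::{field,finite}) set" and I :: "'i set"
  assumes U: "V.subspace U" and "S \<subseteq> U" "V.independent S" and "finite I"
  shows "card (independent_extensions U S I) =
    (\<Prod>i = card S..<card S + card I. CARD('a) ^ V.dim U - CARD('a) ^ i)"
  using \<open>finite I\<close>
proof (induction I rule: finite_induct)
  case empty
  have "independent_extensions U S ({} :: 'i set) = {\<lambda>_. undefined}"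
    using assms by (auto simp: independent_extensions_def)
  then show ?case
    by simp
next
  case (insert x I)
  let ?E = "independent_extensions U S I"
  let ?free = "\<lambda>f. U - V.span (S \<union> f ` I)"
  have card_free: "card (?free f) = CARD('a) ^ V.dim U - CARD('a) ^ (card S + card I)"
    if f: "f \<in> ?E" for f
  proof -
    have indep: "V.independent (S \<union> f ` I)" and "inj_on f I" "S \<inter> f ` I = {}"
      using f by (auto simp: independent_extensions_def)
    then have "card (S \<union> f ` I) = card S + card I"
      by (metis card_Un_disjoint card_image finite)
    moreover have "V.span (S \<union> f ` I) \<subseteq> U"
      using f assms by (intro V.span_minimal) (auto simp: independent_extensions_def PiE_iff)
    ultimately show ?thesis
      using indep card_fun_subspace[OF U] V.card_span_independent[of "S \<union> f ` I"]
      by (simp add: card_Diff_subset)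
  qed
  have "inj_on (\<lambda>(f, v). f(x := v)) (SIGMA f : ?E. ?free f)"
    by (rule inj_on_subset[OF inj_on_fun_upd_PiE[OF insert.hyps(2)]])
      (auto simp: independent_extensions_def)
  then have "card (independent_extensions U S (insert x I)) = (\<Sum>f\<in>?E. card (?free f))"
    using insert.hyps card_SigmaI[OF finite_independent_extensions[OF insert.hyps(1)], where B = ?free]
    by (simp add: independent_extensions_insert card_image)
  also have "\<dots> = card ?E * (CARD('a) ^ V.dim U - CARD('a) ^ (card S + card I))"
    using card_free by simp
  finally show ?case
    using insert by simp
qed

text \<open>Ordered bases of \<open>F\<^sub>q\<^sup>n\<close> indexed by the coordinates; each spans the copy
  \<open>A \<mapsto> span (B ` A)\<close> of the Boolean lattice.\<close>

definition frames :: "('n \<Rightarrow> 'n \<Rightarrow> 'a::field) set" where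
  "frames = {B. inj B \<and> V.independent (range B)}"

lemma frames_eq_independent_extensions: "frames = independent_extensions UNIV {} UNIV"
  by (auto simp: frames_def independent_extensions_def)

lemma card_frames:
  "card (frames :: ('n::finite \<Rightarrow> 'n \<Rightarrow> 'a::{field,finite}) set) =
    (\<Prod>i<CARD('n). CARD('a) ^ CARD('n) - CARD('a) ^ i)"
  unfolding frames_eq_independent_extensions
  by (subst card_independent_extensions) (auto simp: V.independent_empty dim_UNIV_fun atLeast0LessThan)

lemma card_frames_pos: "0 < card (frames :: ('n::finite \<Rightarrow> 'n \<Rightarrow> 'a::{field,finite}) set)"
proof -
  have "CARD('a) ^ i < CARD('a) ^ CARD('n)" if "i < CARD('n)" for i
    using card_field_ge_two[where 'a='a] that by (intro power_strict_increasing) auto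
  then show ?thesis
    unfolding card_frames by (intro prod_pos) simp
qed

lemma frame_span_Int:
  assumes "B \<in> frames"
  shows "V.span (B ` A) \<inter> V.span (B ` A') = V.span (B ` (A \<inter> A'))"
  using assms V.span_Int_independent[of "range B" "B ` A" "B ` A'"]
  by (auto simp: frames_def image_Int)

lemma dim_frame_span:
  fixes B :: "'n::finite \<Rightarrow> 'n \<Rightarrow> 'a::{field,finite}"
  assumes "B \<in> frames"
  shows "V.dim (V.span (B ` A)) = card A"
proof -
  have "V.independent (B ` A)"
    using assms V.independent_mono[of "range B" "B ` A"] by (auto simp: frames_def)
  then show ?thesis
    using assms by (simp add: V.dim_eq_card_independent card_image frames_def inj_on_subset[of B UNIV A])
qed

lemma frame_span_subset_iff:
  fixes B :: "'n::finite \<Rightarrow> 'n \<Rightarrow> 'a::{field,finite}"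
  assumes B: "B \<in> frames"
  shows "V.span (B ` A) \<subseteq> V.span (B ` A') \<longleftrightarrow> A \<subseteq> A'"
proof
  assume "V.span (B ` A) \<subseteq> V.span (B ` A')"
  then have "V.span (B ` A) = V.span (B ` (A \<inter> A'))"
    using frame_span_Int[OF B, of A A'] by blast
  then have "card A = card (A \<inter> A')"
    using dim_frame_span[OF B] by metis
  then have "A \<inter> A' = A"
    using card_subset_eq[of A "A \<inter> A'"] by simp
  then show "A \<subseteq> A'"
    by blast
qed (intro V.span_mono image_mono)

lemma subspace_embedding_frame:
  fixes B :: "'n::finite \<Rightarrow> 'n \<Rightarrow> 'a::{field,finite}"
  assumes "B \<in> frames"
  shows "subspace_embedding (\<lambda>A. V.span (B ` A))"
proof -
  have "inj (\<lambda>A. V.span (B ` A))"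
    by (rule injI) (metis assms frame_span_subset_iff order.refl subset_antisym)
  then show ?thesis
    unfolding subspace_embedding_def subspaces_def vspan_def
    using frame_span_subset_iff[OF assms] frame_span_Int[OF assms]
    by (simp add: image_Un V.span_Un_span)
qed

lemma inj_on_merge_PiE:
  "inj_on (\<lambda>(f, g) i. if i \<in> A then f i else g i) ((A \<rightarrow>\<^sub>E X) \<times> (- A \<rightarrow>\<^sub>E Y))"
proof (rule inj_onI, clarify)
  fix f g f' g'
  assume f: "f \<in> A \<rightarrow>\<^sub>E X" "f' \<in> A \<rightarrow>\<^sub>E X" and g: "g \<in> - A \<rightarrow>\<^sub>E Y" "g' \<in> - A \<rightarrow>\<^sub>E Y"
    and eq: "(\<lambda>i. if i \<in> A then f i else g i) = (\<lambda>i. if i \<in> A then f' i else g' i)"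
  have "f i = f' i \<and> g i = g' i" for i
    using fun_cong[OF eq, of i] PiE_arb[OF f(1)] PiE_arb[OF f(2)] PiE_arb[OF g(1)] PiE_arb[OF g(2)]
    by (cases "i \<in> A") auto
  then show "f = f' \<and> g = g'"
    by auto
qed

lemma merge_mem_frames_with_span:
  fixes U :: "('n::finite \<Rightarrow> 'a::{field,finite}) set"
  assumes U: "V.subspace U" and A: "card A = V.dim U"
    and f: "f \<in> independent_extensions U {} A"
    and g: "g \<in> independent_extensions UNIV (f ` A) (- A)"
  shows "(\<lambda>i. if i \<in> A then f i else g i) \<in> {B \<in> frames. V.span (B ` A) = U}"
proof -
  define B where "B = (\<lambda>i. if i \<in> A then f i else g i)"
  have f': "f ` A \<subseteq> U" "inj_on f A" "V.independent (f ` A)"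
    using f by (auto simp: independent_extensions_def)
  have g': "inj_on g (- A)" "g ` (- A) \<inter> f ` A = {}" "V.independent (f ` A \<union> g ` (- A))"
    using g by (auto simp: independent_extensions_def)
  have BA: "B ` A = f ` A" and BnA: "B ` (- A) = g ` (- A)"
    by (auto simp: B_def)
  have range: "range B = f ` A \<union> g ` (- A)"
    using BA BnA by (metis image_Un Compl_partition)
  have "inj_on B A \<longleftrightarrow> inj_on f A" "inj_on B (- A) \<longleftrightarrow> inj_on g (- A)"
    by (auto intro!: inj_on_cong simp: B_def)
  then have "inj_on B (A \<union> - A)"
    unfolding inj_on_Un using f'(2) g'(1,2) BA BnA by (simp add: Int_commute Diff_triv)
  moreover have "V.span (B ` A) = U"
    unfolding BA using f' U A by (intro span_eq_if_card_eq_dim) (auto simp: card_image)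
  ultimately show ?thesis
    using g'(3) by (simp add: frames_def range flip: B_def)
qed

lemma frames_with_span_eq:
  fixes U :: "('n::finite \<Rightarrow> 'a::{field,finite}) set"
  assumes U: "V.subspace U" and A: "card A = V.dim U"
  shows "{B \<in> frames. V.span (B ` A) = U} = (\<lambda>(f, g) i. if i \<in> A then f i else g i) `
    (SIGMA f : independent_extensions U {} A. independent_extensions UNIV (f ` A) (- A))"
proof (intro equalityI subsetI)
  fix B assume "B \<in> {B \<in> frames. V.span (B ` A) = U}"
  then have B: "inj B" "V.independent (range B)" "V.span (B ` A) = U"
    by (auto simp: frames_def)
  have indep: "V.independent (B ` A \<union> B ` (- A))"
    using B(2) by (simp add: image_Un[symmetric])
  have "restrict B A \<in> independent_extensions U {} A"
    using B(1,3) V.span_superset[of "B ` A"] V.independent_mono[OF indep, of "B ` A"]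
    by (auto simp: independent_extensions_def inj_on_subset[of B UNIV])
  moreover have "restrict B (- A) \<in> independent_extensions UNIV (restrict B A ` A) (- A)"
    using B(1) indep by (auto simp: independent_extensions_def inj_on_subset[of B UNIV] inj_eq Un_commute)
  moreover have "B = (\<lambda>i. if i \<in> A then restrict B A i else restrict B (- A) i)"
    by auto
  ultimately show "B \<in> (\<lambda>(f, g) i. if i \<in> A then f i else g i) `
      (SIGMA f : independent_extensions U {} A. independent_extensions UNIV (f ` A) (- A))"
    by (intro image_eqI[of _ _ "(restrict B A, restrict B (- A))"]) auto
next
  fix B assume "B \<in> (\<lambda>(f, g) i. if i \<in> A then f i else g i) `
      (SIGMA f : independent_extensions U {} A. independent_extensions UNIV (f ` A) (- A))"
  then show "B \<in> {B \<in> frames. V.span (B ` A) = U}"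
    using merge_mem_frames_with_span[OF U A] by auto
qed

lemma card_frames_with_span:
  fixes U :: "('n::finite \<Rightarrow> 'a::{field,finite}) set"
  assumes U: "V.subspace U" and A: "card A = V.dim U"
  shows "card {B \<in> frames. V.span (B ` A) = U} =
    (\<Prod>i<V.dim U. CARD('a) ^ V.dim U - CARD('a) ^ i) *
    (\<Prod>i = V.dim U..<CARD('n). CARD('a) ^ CARD('n) - CARD('a) ^ i)"
proof -
  let ?E = "independent_extensions U {} A"
  let ?Ext = "\<lambda>f. independent_extensions UNIV (f ` A) (- A)"
  have card_Ext: "card (?Ext f) = (\<Prod>i = V.dim U..<CARD('n). CARD('a) ^ CARD('n) - CARD('a) ^ i)"
    if "f \<in> ?E" for f
  proof -
    have "inj_on f A" "V.independent (f ` A)"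
      using that by (auto simp: independent_extensions_def)
    moreover have "card (- A) = CARD('n) - card A"
      using card_Diff_subset[of A UNIV] by (simp add: Compl_eq_Diff_UNIV)
    moreover have "card A \<le> CARD('n)"
      by (rule card_mono) auto
    ultimately show ?thesis
      using A by (simp add: card_independent_extensions V.subspace_UNIV dim_UNIV_fun card_image)
  qed
  have "inj_on (\<lambda>(f, g) i. if i \<in> A then f i else g i) (SIGMA f : ?E. ?Ext f)"
    by (rule inj_on_subset[OF inj_on_merge_PiE]) (auto simp: independent_extensions_def)
  then have "card {B \<in> frames. V.span (B ` A) = U} = (\<Sum>f\<in>?E. card (?Ext f))"
    using card_SigmaI[OF finite_independent_extensions, where B = ?Ext]
    by (simp add: frames_with_span_eq[OF U A] card_image)
  also have "\<dots> = card ?E * (\<Prod>i = V.dim U..<CARD('n). CARD('a) ^ CARD('n) - CARD('a) ^ i)"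
    using card_Ext by simp
  also have "card ?E = (\<Prod>i<V.dim U. CARD('a) ^ V.dim U - CARD('a) ^ i)"
    using U A by (simp add: card_independent_extensions V.independent_empty atLeast0LessThan)
  finally show ?thesis .
qed

lemma card_subspaces_of_dim_mult:
  "card {U :: ('n::finite \<Rightarrow> 'a::{field,finite}) set. V.subspace U \<and> V.dim U = j} *
      (\<Prod>i<j. CARD('a) ^ j - CARD('a) ^ i) =
    (\<Prod>i<j. CARD('a) ^ CARD('n) - CARD('a) ^ i)"
proof -
  let ?S = "{U :: ('n \<Rightarrow> 'a) set. V.subspace U \<and> V.dim U = j}"
  let ?E = "\<lambda>U :: ('n \<Rightarrow> 'a) set. independent_extensions U {} {..<j}"
  have span_eq: "V.span (f ` {..<j}) = U" if "U \<in> ?S" "f \<in> ?E U" for U f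
    using that by (intro span_eq_if_card_eq_dim)
      (auto simp: independent_extensions_def card_image PiE_iff)
  have "?E UNIV = (\<Union>U\<in>?S. ?E U)"
  proof (intro equalityI subsetI)
    fix f assume f: "f \<in> ?E UNIV"
    then have "inj_on f {..<j}" "V.independent (f ` {..<j})"
      by (auto simp: independent_extensions_def)
    then have "V.span (f ` {..<j}) \<in> ?S"
      by (simp add: V.dim_eq_card_independent card_image)
    moreover have "f \<in> ?E (V.span (f ` {..<j}))"
      using f by (auto simp: independent_extensions_def PiE_iff intro: V.span_base)
    ultimately show "f \<in> (\<Union>U\<in>?S. ?E U)"
      by blast
  qed (auto simp: independent_extensions_def PiE_iff)
  moreover have "?E U \<inter> ?E U' = {}" if "U \<in> ?S" "U' \<in> ?S" "U \<noteq> U'" for U U'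
    using that span_eq by blast
  ultimately have "card (?E UNIV) = (\<Sum>U\<in>?S. card (?E U))"
    by (simp add: card_UN_disjoint finite_independent_extensions)
  also have "\<dots> = card ?S * (\<Prod>i<j. CARD('a) ^ j - CARD('a) ^ i)"
    by (simp add: card_independent_extensions V.independent_empty atLeast0LessThan)
  finally show ?thesis
    by (simp add: card_independent_extensions V.independent_empty V.subspace_UNIV dim_UNIV_fun
        atLeast0LessThan)
qed

lemma card_frames_containing_mult:
  fixes U :: "('n::finite \<Rightarrow> 'a::{field,finite}) set"
  assumes U: "V.subspace U"
  shows "card {B \<in> frames. U \<in> range (\<lambda>A. V.span (B ` A))} *
      card {W :: ('n \<Rightarrow> 'a) set. V.subspace W \<and> V.dim W = V.dim U} =
    (CARD('n) choose V.dim U) * card (frames :: ('n \<Rightarrow> 'n \<Rightarrow> 'a) set)"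
proof -
  let ?j = "V.dim U" and ?q = "CARD('a)" and ?n = "CARD('n)"
  let ?F = "\<lambda>A. {B \<in> frames. V.span (B ` A) = U}"
  have "{B \<in> frames. U \<in> range (\<lambda>A. V.span (B ` A))} = (\<Union>A\<in>{A. card A = ?j}. ?F A)"
    using dim_frame_span by fastforce
  moreover have "?F A \<inter> ?F A' = {}" if "A \<noteq> A'" for A A'
  proof -
    have "A = A'" if "B \<in> ?F A" "B \<in> ?F A'" for B
      using that frame_span_subset_iff[of B A A'] frame_span_subset_iff[of B A' A] by auto
    with \<open>A \<noteq> A'\<close> show ?thesis
      by blast
  qed
  ultimately have "card {B \<in> frames. U \<in> range (\<lambda>A. V.span (B ` A))} = (\<Sum>A | card A = ?j. card (?F A))"
    by (simp add: card_UN_disjoint)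
  also have "\<dots> = (?n choose ?j) *
      ((\<Prod>i<?j. ?q ^ ?j - ?q ^ i) * (\<Prod>i = ?j..<?n. ?q ^ ?n - ?q ^ i))"
    using n_subsets[of "UNIV :: 'n set" ?j] by (simp add: card_frames_with_span[OF U])
  finally have "card {B \<in> frames. U \<in> range (\<lambda>A. V.span (B ` A))} *
      card {W :: ('n \<Rightarrow> 'a) set. V.subspace W \<and> V.dim W = ?j} =
    (?n choose ?j) * ((\<Prod>i<?j. ?q ^ ?n - ?q ^ i) * (\<Prod>i = ?j..<?n. ?q ^ ?n - ?q ^ i))"
    using card_subspaces_of_dim_mult[where 'n='n and 'a='a and j = ?j] by (simp add: ac_simps)
  also have "(\<Prod>i<?j. ?q ^ ?n - ?q ^ i) * (\<Prod>i = ?j..<?n. ?q ^ ?n - ?q ^ i) = card (frames :: ('n \<Rightarrow> 'n \<Rightarrow> 'a) set)"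
    using prod.atLeastLessThan_concat[of 0 ?j ?n "\<lambda>i. ?q ^ ?n - ?q ^ i"] dim_fun_subspace_le[OF U]
    by (simp add: card_frames atLeast0LessThan)
  finally show ?thesis .
qed

text \<open>For \<open>m < i\<close> both sides vanish, by truncated subtraction on either side.\<close>

lemma of_nat_power_diff_power:
  assumes "1 \<le> q"
  shows "real (q ^ m - q ^ i) = real q ^ i * (real q ^ (m - i) - 1)"
proof (cases "i \<le> m")
  case True
  then have split: "q ^ m = q ^ i * q ^ (m - i)"
    by (metis le_add_diff_inverse power_add)
  have "real (q ^ m - q ^ i) = real (q ^ m) - real (q ^ i)"
    using assms True by (intro of_nat_diff power_increasing)
  also have "\<dots> = real q ^ i * real q ^ (m - i) - real q ^ i"
    unfolding split by simp
  finally show ?thesis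
    by (simp add: right_diff_distrib)
next
  case False
  then have "q ^ m \<le> q ^ i"
    using assms by (intro power_increasing) auto
  with False show ?thesis
    by simp
qed

lemma of_nat_prod_power_diff_power:
  assumes "1 \<le> q"
  shows "real (\<Prod>i<j. q ^ m - q ^ i) = (\<Prod>i<j. real q ^ i) * (\<Prod>i<j. real q ^ (m - i) - 1)"
  unfolding of_nat_prod of_nat_power_diff_power[OF assms] prod.distrib ..

lemma card_subspaces_of_dim:
  "real (card {U :: ('n::finite \<Rightarrow> 'a::{field,finite}) set. V.subspace U \<and> V.dim U = j}) =
    qbinom CARD('a) CARD('n) j"
proof -
  let ?q = "CARD('a)" and ?n = "CARD('n)"
  let ?c = "real (card {U :: ('n \<Rightarrow> 'a) set. V.subspace U \<and> V.dim U = j})"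
  let ?P = "\<Prod>i<j. real ?q ^ i"
  have q: "1 < real ?q" and q1: "1 \<le> ?q"
    using card_field_ge_two[where 'a='a] by linarith+
  have "(\<Prod>i<j. real ?q ^ (j - i) - 1) = (\<Prod>i<j. real ?q ^ (j - Suc i + 1) - 1)"
    by (intro prod.cong refl) (simp add: Suc_diff_Suc)
  also have "\<dots> = (\<Prod>i<j. real ?q ^ (i + 1) - 1)"
    by (rule prod.nat_diff_reindex)
  finally have reindex: "(\<Prod>i<j. real ?q ^ (j - i) - 1) = (\<Prod>i<j. real ?q ^ (i + 1) - 1)" .
  have "?c * real (\<Prod>i<j. ?q ^ j - ?q ^ i) = real (\<Prod>i<j. ?q ^ ?n - ?q ^ i)"
    unfolding of_nat_mult[symmetric] card_subspaces_of_dim_mult ..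
  then have "?P * (?c * (\<Prod>i<j. real ?q ^ (i + 1) - 1)) = ?P * (\<Prod>i<j. real ?q ^ (?n - i) - 1)"
    unfolding of_nat_prod_power_diff_power[OF q1] reindex by (simp only: ac_simps)
  moreover have "?P \<noteq> 0"
    using q by simp
  ultimately have "?c * (\<Prod>i<j. real ?q ^ (i + 1) - 1) = (\<Prod>i<j. real ?q ^ (?n - i) - 1)"
    using mult_left_cancel by blast
  moreover have "(\<Prod>i<j. real ?q ^ (i + 1) - 1) \<noteq> 0"
  proof -
    have "0 < real ?q ^ (i + 1) - 1" for i
      using one_less_power[OF q, of "i + 1"] by linarith
    then have "(\<Prod>i<j. real ?q ^ (i + 1) - 1) > 0"
      by (rule prod_pos)
    then show ?thesis
      by linarith
  qed
  ultimately show ?thesis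
    unfolding qbinom_def by (rule eq_divide_imp[rotated])
qed

lemma power_minus_one_mult_mono:
  fixes q :: real
  assumes q: "2 \<le> q" and a: "1 \<le> a" and "a \<le> b"
  shows "(q ^ a - 1) * b \<le> (q ^ b - 1) * a"
  using \<open>a \<le> b\<close>
proof (induction b rule: dec_induct)
  case (step m)
  have m: "1 \<le> m"
    using a step.hyps by simp
  have "real m * 2 \<le> real m * q"
    using q by (intro mult_left_mono) auto
  then have "0 \<le> m * q - m - 1"
    using m by linarith
  then have "0 \<le> q ^ m * (m * q - m - 1)"
    using q by simp
  then have step_ineq: "(q ^ m - 1) * (m + 1) \<le> (q ^ (m + 1) - 1) * m"
    by (simp add: algebra_simps)
  have "(q ^ a - 1) * (m + 1) * m = (q ^ a - 1) * m * (m + 1)"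
    by (simp add: algebra_simps)
  also have "\<dots> \<le> (q ^ m - 1) * a * (m + 1)"
    using step.IH by (intro mult_right_mono) auto
  also have "\<dots> = (q ^ m - 1) * (m + 1) * a"
    by (simp add: algebra_simps)
  also have "\<dots> \<le> (q ^ (m + 1) - 1) * m * a"
    using step_ineq by (intro mult_right_mono) auto
  finally have "(q ^ a - 1) * (m + 1) * m \<le> (q ^ (m + 1) - 1) * a * m"
    by (simp add: algebra_simps)
  then show ?case
    using m by simp
qed simp

lemma qbinom_pos:
  assumes "2 \<le> q" "j \<le> n"
  shows "0 < qbinom q n j"
proof -
  have pos: "0 < real q ^ m - 1" if "0 < m" for m
    using assms one_less_power[of "real q" m] that by simp
  show ?thesis
    unfolding qbinom_def using assms by (intro divide_pos_pos prod_pos pos) auto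
qed

definition qfact :: "nat \<Rightarrow> nat \<Rightarrow> real" where
  "qfact q m = (\<Prod>i<m. real q ^ (i + 1) - 1)"

lemma prod_qbinom_numerator_mult_qfact:
  "j \<le> n \<Longrightarrow> (\<Prod>i<j. real q ^ (n - i) - 1) * qfact q (n - j) = qfact q n"
proof (induction j)
  case (Suc j)
  then have "n - j = Suc (n - Suc j)"
    by simp
  with Suc show ?case
    by (simp add: qfact_def algebra_simps)
qed simp

lemma qbinom_eq_qfact:
  assumes "2 \<le> q" "j \<le> n"
  shows "qbinom q n j = qfact q n / (qfact q j * qfact q (n - j))"
proof -
  have "0 < real q ^ (i + 1) - 1" for i
    using assms one_less_power[of "real q" "i + 1"] by simp
  then have "qfact q (n - j) \<noteq> 0"
    unfolding qfact_def by (simp add: prod_pos less_imp_neq[symmetric])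
  then show ?thesis
    unfolding qbinom_def qfact_def[of q j, symmetric] prod_qbinom_numerator_mult_qfact[OF assms(2), symmetric]
    by simp
qed

lemma qbinom_symmetric:
  assumes "2 \<le> q" "j \<le> n"
  shows "qbinom q n (n - j) = qbinom q n j"
  using assms by (simp add: qbinom_eq_qfact mult.commute)

definition qbinom_ratio :: "nat \<Rightarrow> nat \<Rightarrow> nat \<Rightarrow> real" where
  "qbinom_ratio q n j = qbinom q n j / real (n choose j)"

lemma qbinom_ratio_symmetric:
  assumes "2 \<le> q" "j \<le> n"
  shows "qbinom_ratio q n (n - j) = qbinom_ratio q n j"
  using assms by (simp add: qbinom_ratio_def qbinom_symmetric binomial_symmetric[symmetric])

lemma qbinom_Suc:
  "qbinom q n (Suc j) = qbinom q n j * ((real q ^ (n - j) - 1) / (real q ^ (j + 1) - 1))"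
  unfolding qbinom_def by simp

lemma qbinom_ratio_Suc:
  assumes "j < n"
  shows "qbinom_ratio q n (Suc j) =
    qbinom_ratio q n j * (((real q ^ (n - j) - 1) * (j + 1)) / ((real q ^ (j + 1) - 1) * (n - j)))"
proof -
  have "Suc j * (n choose Suc j) = (n - j) * (n choose j)"
    using times_binomial_minus1_eq[of "Suc j" n] binomial_absorb_comp[of n j] by simp
  then have "real (Suc j) * real (n choose Suc j) = real (n - j) * real (n choose j)"
    by (simp only: of_nat_mult[symmetric])
  then have "real (n choose Suc j) = real (n choose j) * real (n - j) / real (Suc j)"
    by (simp add: field_simps)
  then show ?thesis
    unfolding qbinom_ratio_def qbinom_Suc
    by (simp add: divide_divide_times_eq times_divide_times_eq ac_simps)
qed

lemma qbinom_ratio_Suc_ge: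
  assumes q: "2 \<le> q" and j: "2 * j + 1 \<le> n"
  shows "qbinom_ratio q n j \<le> qbinom_ratio q n (Suc j)"
proof -
  have "0 < (real q ^ (j + 1) - 1) * (n - j)"
    using q j one_less_power[of "real q" "j + 1"] by simp
  moreover have "(real q ^ (j + 1) - 1) * (n - j) \<le> (real q ^ (n - j) - 1) * (j + 1)"
    using power_minus_one_mult_mono[of "real q" "j + 1" "n - j"] q j by simp
  ultimately have "1 \<le> ((real q ^ (n - j) - 1) * (j + 1)) / ((real q ^ (j + 1) - 1) * (n - j))"
    by (rule le_divide_eq_1_pos[THEN iffD2])
  moreover have "0 \<le> qbinom_ratio q n j"
    using qbinom_pos[OF q, of j n] j by (simp add: qbinom_ratio_def)
  ultimately have "qbinom_ratio q n j * 1 \<le>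
      qbinom_ratio q n j * (((real q ^ (n - j) - 1) * (j + 1)) / ((real q ^ (j + 1) - 1) * (n - j)))"
    by (rule mult_left_mono)
  moreover have "j < n"
    using j by simp
  ultimately show ?thesis
    by (simp add: qbinom_ratio_Suc)
qed

lemma qbinom_ratio_mono:
  assumes "2 \<le> q" "j \<le> j'" "j' \<le> n div 2"
  shows "qbinom_ratio q n j \<le> qbinom_ratio q n j'"
proof -
  let ?f = "\<lambda>i. qbinom_ratio q n (min i (n div 2))"
  have "?f i \<le> ?f (Suc i)" for i
    using qbinom_ratio_Suc_ge[OF assms(1), of i n] by (cases "i < n div 2") auto
  then have "?f j \<le> ?f j'"
    using assms(2) by (rule lift_Suc_mono_le)
  with assms(2,3) show ?thesis
    by (simp add: min_absorb1)
qed

lemma qbinom_ratio_le_closer_to_middle: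
  assumes q: "2 \<le> q" and "j \<le> n" "j' \<le> n" and closer: "\<bar>2 * int j' - n\<bar> \<le> \<bar>2 * int j - n\<bar>"
  shows "qbinom_ratio q n j \<le> qbinom_ratio q n j'"
proof -
  have sym: "qbinom_ratio q n (min i (n - i)) = qbinom_ratio q n i" if "i \<le> n" for i
    using qbinom_ratio_symmetric[OF q that] by (simp add: min_def)
  have "qbinom_ratio q n (min j (n - j)) \<le> qbinom_ratio q n (min j' (n - j'))"
    using closer by (intro qbinom_ratio_mono[OF q]) (auto simp: min_def)
  with sym assms(2,3) show ?thesis
    by simp
qed

definition middle_levels :: "nat \<Rightarrow> nat \<Rightarrow> nat set" where
  "middle_levels n k = (\<lambda>i. nat ((int n - int k) div 2 + int i)) ` {1..k}"

lemma sum_middle_levels: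
  assumes "k \<le> n + 1"
  shows "(\<Sum>i=1..k. f (nat ((int n - int k) div 2 + int i))) = (\<Sum>j\<in>middle_levels n k. f j)"
proof -
  have "inj_on (\<lambda>i. nat ((int n - int k) div 2 + int i)) {1..k}"
    using assms by (intro inj_onI) auto
  then show ?thesis
    unfolding middle_levels_def by (simp add: sum.reindex)
qed

lemma middle_levels_le:
  assumes "k \<le> n + 1" "j \<in> middle_levels n k"
  shows "j \<le> n"
  using assms unfolding middle_levels_def by auto

lemma middle_levels_closer_to_middle:
  assumes "k \<le> n + 1" "j \<in> middle_levels n k" "j' \<notin> middle_levels n k"
  shows "\<bar>2 * int j - n\<bar> \<le> \<bar>2 * int j' - n\<bar>"
proof -
  define a where "a = (int n - int k) div 2"
  have a: "2 * a \<le> int n - int k" "int n - int k \<le> 2 * a + 1"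
    unfolding a_def by linarith+
  obtain i where i: "i \<in> {1..k}" "j = nat (a + int i)"
    using assms(2) unfolding middle_levels_def a_def by auto
  have "int j' \<le> a \<or> a + int k < int j'"
  proof (rule ccontr)
    assume "\<not> ?thesis"
    then have "nat (int j' - a) \<in> {1..k}" "j' = nat (a + int (nat (int j' - a)))"
      by auto
    then show False
      using assms(3) unfolding middle_levels_def a_def[symmetric] by blast
  qed
  then show ?thesis
    using i a assms(1) by auto
qed

lemma qbinom_ratio_le_middle_levels:
  assumes "2 \<le> q" "k \<le> n + 1" "i \<in> middle_levels n k" "j \<le> n" "j \<notin> middle_levels n k"
  shows "qbinom_ratio q n j \<le> qbinom_ratio q n i"
  using assms middle_levels_le middle_levels_closer_to_middle
  by (intro qbinom_ratio_le_closer_to_middle) auto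

lemma le_by_ratio_threshold_in:
  fixes Q C g r :: real
  assumes "0 < Q" "0 < C" "g \<le> Q" "r \<le> Q / C"
  shows "g \<le> Q + r * (g * C / Q - C)"
proof -
  have "r * C / Q \<le> 1"
    using assms by (simp add: field_simps)
  then have "0 \<le> (Q - g) * (1 - r * C / Q)"
    using assms(3) by simp
  with assms(1) show ?thesis
    by (simp add: field_simps)
qed

lemma le_by_ratio_threshold_out:
  fixes Q C g r :: real
  assumes "0 < Q" "0 < C" "0 \<le> g" "Q / C \<le> r"
  shows "g \<le> r * (g * C / Q)"
proof -
  have "1 \<le> r * C / Q"
    using assms by (simp add: field_simps)
  then have "0 \<le> g * (r * C / Q - 1)"
    using assms(3) by simp
  with assms(1) show ?thesis
    by (simp add: field_simps)
qed

text \<open>Weak duality for the fractional knapsack problem, with dual variable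
  \<open>r = min\<^sub>M Q/C\<close>.\<close>

lemma sum_le_sum_by_ratio_threshold:
  fixes Q C g :: "'a \<Rightarrow> real"
  assumes "finite J" "M \<subseteq> J" "M \<noteq> {}"
    and pos: "\<And>j. j \<in> J \<Longrightarrow> 0 < Q j \<and> 0 < C j"
    and g: "\<And>j. j \<in> J \<Longrightarrow> 0 \<le> g j \<and> g j \<le> Q j"
    and ratio: "\<And>i j. i \<in> M \<Longrightarrow> j \<in> J - M \<Longrightarrow> Q j / C j \<le> Q i / C i"
    and weight: "(\<Sum>j\<in>J. g j * C j / Q j) \<le> (\<Sum>j\<in>M. C j)"
  shows "(\<Sum>j\<in>J. g j) \<le> (\<Sum>j\<in>M. Q j)"
proof -
  define r where "r = Min ((\<lambda>j. Q j / C j) ` M)"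
  have fin: "finite M"
    using assms(1,2) by (rule finite_subset[rotated])
  have r_le: "r \<le> Q i / C i" if "i \<in> M" for i
    using fin that unfolding r_def by (intro Min_le) auto
  have "r \<in> (\<lambda>j. Q j / C j) ` M"
    unfolding r_def using fin \<open>M \<noteq> {}\<close> by (intro Min_in) auto
  then obtain i0 where "i0 \<in> M" "r = Q i0 / C i0"
    by blast
  then have "0 \<le> r" and ge_r: "\<And>j. j \<in> J - M \<Longrightarrow> Q j / C j \<le> r"
    using pos[of i0] ratio[of i0] assms(2) by auto
  have "g j \<le> (if j \<in> M then Q j else 0) + r * (g j * C j / Q j - (if j \<in> M then C j else 0))"
    if "j \<in> J" for j
  proof (cases "j \<in> M")
    case True
    then show ?thesis
      using le_by_ratio_threshold_in[of "Q j" "C j" "g j" r] pos[OF that] g[OF that] r_le by simp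
  next
    case False
    then show ?thesis
      using le_by_ratio_threshold_out[of "Q j" "C j" "g j" r] pos[OF that] g[OF that] ge_r that by simp
  qed
  then have "(\<Sum>j\<in>J. g j) \<le>
      (\<Sum>j\<in>J. (if j \<in> M then Q j else 0) + r * (g j * C j / Q j - (if j \<in> M then C j else 0)))"
    by (rule sum_mono)
  also have "\<dots> = (\<Sum>j\<in>M. Q j) + r * ((\<Sum>j\<in>J. g j * C j / Q j) - (\<Sum>j\<in>M. C j))"
    using assms(1,2)
    by (simp add: sum.distrib sum_subtractf sum.If_cases Int_absorb1 flip: sum_distrib_left)
  also have "\<dots> \<le> (\<Sum>j\<in>M. Q j)"
    using \<open>0 \<le> r\<close> weight by (simp add: mult_nonneg_nonpos)
  finally show ?thesis .
qed

lemma sum_level_weights_le: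
  fixes G :: "('n::finite \<Rightarrow> 'a::{field,finite}) set set"
  assumes G: "G \<subseteq> subspaces"
    and per_frame: "\<And>B. B \<in> frames \<Longrightarrow> card {U \<in> G. U \<in> range (\<lambda>A. V.span (B ` A))} \<le> m"
  shows "(\<Sum>U\<in>G. real (CARD('n) choose V.dim U) / qbinom CARD('a) CARD('n) (V.dim U)) \<le> m"
proof -
  let ?F = "frames :: ('n \<Rightarrow> 'n \<Rightarrow> 'a) set"
  let ?c = "\<lambda>U. card {B \<in> ?F. U \<in> range (\<lambda>A. V.span (B ` A))}"
  have c: "real (?c U) = real (card ?F) * (real (CARD('n) choose V.dim U) / qbinom CARD('a) CARD('n) (V.dim U))"
    if "U \<in> G" for U
  proof -
    have U: "V.subspace U"
      using G that by (auto simp: subspaces_def)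
    then have "0 < qbinom CARD('a) CARD('n) (V.dim U)"
      using card_field_ge_two dim_fun_subspace_le by (intro qbinom_pos)
    with card_frames_containing_mult[OF U, THEN arg_cong[of _ _ real]] show ?thesis
      by (simp add: card_subspaces_of_dim field_simps)
  qed
  have "real (card ?F) * (\<Sum>U\<in>G. real (CARD('n) choose V.dim U) / qbinom CARD('a) CARD('n) (V.dim U)) =
      real (\<Sum>U\<in>G. ?c U)"
    by (simp add: c sum_distrib_left)
  also have "(\<Sum>U\<in>G. ?c U) = (\<Sum>B\<in>?F. card {U \<in> G. U \<in> range (\<lambda>A. V.span (B ` A))})"
    by (rule sum_multicount_gen[symmetric]) auto
  also have "\<dots> \<le> card ?F * m"
    using per_frame sum_bounded_above[of ?F _ m] by simp
  finally show ?thesis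
    using card_frames_pos[where 'n='n and 'a='a] by (simp add: mult_le_cancel_left_pos)
qed

lemma sum_by_levels:
  fixes f :: "nat \<Rightarrow> real"
  assumes "finite G" "\<And>U. U \<in> G \<Longrightarrow> d U \<le> n"
  shows "(\<Sum>U\<in>G. f (d U)) = (\<Sum>j\<le>n. real (card {U \<in> G. d U = j}) * f j)"
proof -
  have "(\<Sum>U\<in>G. f (d U)) = (\<Sum>j\<le>n. \<Sum>U \<in> {U \<in> G. d U = j}. f (d U))"
    using assms by (intro sum.group[symmetric]) auto
  also have "\<dots> = (\<Sum>j\<le>n. real (card {U \<in> G. d U = j}) * f j)"
    by (intro sum.cong refl) simp
  finally show ?thesis .
qed

lemma card_le_Sigma_q_if_level_weights_le:
  fixes G :: "('n::finite \<Rightarrow> 'a::{field,finite}) set set"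
  assumes G: "G \<subseteq> subspaces" and k: "1 \<le> k" "k \<le> CARD('n) + 1"
    and weight: "(\<Sum>U\<in>G. real (CARD('n) choose V.dim U) / qbinom CARD('a) CARD('n) (V.dim U))
      \<le> Sigma_mid CARD('n) k"
  shows "real (card G) \<le> Sigma_q CARD('a) CARD('n) k"
proof -
  let ?q = "CARD('a)" and ?n = "CARD('n)" and ?M = "middle_levels CARD('n) k"
  define g where "g j = real (card {U \<in> G. V.dim U = j})" for j
  have q: "2 \<le> ?q"
    by (rule card_field_ge_two)
  have dim_le: "V.dim U \<le> ?n" if "U \<in> G" for U
    using G that dim_fun_subspace_le by (auto simp: subspaces_def)
  have levels: "(\<Sum>U\<in>G. f (V.dim U)) = (\<Sum>j\<le>?n. g j * f j)" for f
    unfolding g_def by (rule sum_by_levels) (use dim_le in auto)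
  have "(\<Sum>j\<le>?n. g j) \<le> (\<Sum>j\<in>?M. qbinom ?q ?n j)"
  proof (rule sum_le_sum_by_ratio_threshold)
    show "?M \<subseteq> {..?n}"
      using middle_levels_le[OF k(2)] by blast
    show "?M \<noteq> {}"
      using k(1) unfolding middle_levels_def by simp
    show "0 < qbinom ?q ?n j \<and> 0 < real (?n choose j)" if "j \<in> {..?n}" for j
      using that qbinom_pos[OF q] by simp
    show "0 \<le> g j \<and> g j \<le> qbinom ?q ?n j" for j
    proof -
      have "{U \<in> G. V.dim U = j} \<subseteq> {U. V.subspace U \<and> V.dim U = j}"
        using G by (auto simp: subspaces_def)
      then have "card {U \<in> G. V.dim U = j} \<le> card {U :: ('n \<Rightarrow> 'a) set. V.subspace U \<and> V.dim U = j}"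
        by (intro card_mono) simp_all
      then show ?thesis
        unfolding g_def card_subspaces_of_dim[symmetric] by simp
    qed
    show "qbinom ?q ?n j / real (?n choose j) \<le> qbinom ?q ?n i / real (?n choose i)"
      if "i \<in> ?M" "j \<in> {..?n} - ?M" for i j
      using that qbinom_ratio_le_middle_levels[OF q k(2)] by (simp add: qbinom_ratio_def)
    show "(\<Sum>j\<le>?n. g j * real (?n choose j) / qbinom ?q ?n j) \<le> (\<Sum>j\<in>?M. real (?n choose j))"
      using weight levels[of "\<lambda>j. real (?n choose j) / qbinom ?q ?n j"]
      unfolding Sigma_mid_def of_nat_sum sum_middle_levels[OF k(2)] by simp
  qed simp
  then show ?thesis
    using levels[of "\<lambda>_. 1"] unfolding Sigma_q_def sum_middle_levels[OF k(2)] by simp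
qed

lemma card_frame_lattice_Int_le:
  fixes T_set :: "'n::finite set set \<Rightarrow> bool"
    and T_sub :: "('n \<Rightarrow> 'a::{field,finite}) set set \<Rightarrow> bool"
  assumes hered_sub: "\<And>F G. F \<subseteq> subspaces \<Longrightarrow> T_sub F \<Longrightarrow> G \<subseteq> F \<Longrightarrow> T_sub G"
    and invariant: "\<And>(\<phi> :: 'n set \<Rightarrow> ('n \<Rightarrow> 'a) set) A.
                      subspace_embedding \<phi> \<Longrightarrow> T_sub (\<phi> ` A) \<longleftrightarrow> T_set A"
    and bound: "\<And>F. T_set F \<Longrightarrow> card F \<le> m"
    and G: "G \<subseteq> subspaces" "T_sub G" and B: "B \<in> frames"
  shows "card {U \<in> G. U \<in> range (\<lambda>A. V.span (B ` A))} \<le> m"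
proof -
  let ?\<phi> = "\<lambda>A. V.span (B ` A)"
  have emb: "subspace_embedding ?\<phi>"
    using B by (rule subspace_embedding_frame)
  have "T_sub (?\<phi> ` (?\<phi> -` G))"
    using G by (rule hered_sub) auto
  then have "T_set (?\<phi> -` G)"
    by (rule invariant[OF emb, THEN iffD1])
  then have "card (?\<phi> -` G) \<le> m"
    by (rule bound)
  moreover have "inj ?\<phi>"
    using emb by (simp add: subspace_embedding_def)
  moreover have "?\<phi> ` (?\<phi> -` G) = {U \<in> G. U \<in> range ?\<phi>}"
    by auto
  ultimately show ?thesis
    using card_image[of ?\<phi> "?\<phi> -` G"] by (simp add: inj_on_subset)
qed

theorem theorem1p3:
  fixes T_set :: "'n::finite set set \<Rightarrow> bool"
    and T_sub :: "('n \<Rightarrow> 'a::{field,finite}) set set \<Rightarrow> bool"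
    and k :: nat
  assumes "1 \<le> k" and "k \<le> CARD('n) + 1"
    and hered_set: "\<And>F G. T_set F \<Longrightarrow> G \<subseteq> F \<Longrightarrow> T_set G"
    and hered_sub: "\<And>F G. F \<subseteq> subspaces \<Longrightarrow> T_sub F \<Longrightarrow> G \<subseteq> F \<Longrightarrow> T_sub G"
    and invariant: "\<And>(\<phi> :: 'n set \<Rightarrow> ('n \<Rightarrow> 'a) set) A.
                      subspace_embedding \<phi> \<Longrightarrow> T_sub (\<phi> ` A) \<longleftrightarrow> T_set A"
    and bound: "\<And>F. T_set F \<Longrightarrow> card F \<le> Sigma_mid CARD('n) k"
  shows "\<forall>G. G \<subseteq> subspaces \<and> T_sub G \<longrightarrow> real (card G) \<le> Sigma_q CARD('a) CARD('n) k"
proof (intro allI impI, elim conjE)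
  fix G :: "('n \<Rightarrow> 'a) set set"
  assume G: "G \<subseteq> subspaces" "T_sub G"
  have "card {U \<in> G. U \<in> range (\<lambda>A. V.span (B ` A))} \<le> Sigma_mid CARD('n) k"
    if "B \<in> frames" for B
    using hered_sub invariant bound G that by (rule card_frame_lattice_Int_le)
  then have "(\<Sum>U\<in>G. real (CARD('n) choose V.dim U) / qbinom CARD('a) CARD('n) (V.dim U))
      \<le> Sigma_mid CARD('n) k"
    by (rule sum_level_weights_le[OF G(1)])
  then show "real (card G) \<le> Sigma_q CARD('a) CARD('n) k"
    using G(1) assms(1,2) by (intro card_le_Sigma_q_if_level_weights_le)
qed

end
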